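(* Let $m\ge 2$ and $\alpha\in[0,1]$. Every deterministic voting rule $f$ that takes ranked preferences with intensities as input has, under mandatory elicitation of the intensities, metric distortion $$\mathsf{dist}_\alpha(f)\;\ge\;1+2\max\left(\alpha,\ \frac{1-\alpha^{\lfloor m/2\rfloor}}{1+\alpha^{\lfloor m/2\rfloor}}\right).$$
   Context: An election $\mathcal E=(N,A,\vec\sigma)$ has a finite set $N$ of $n$ agents, a set $A$ of $m$ alternatives, and a profile $\vec\sigma=(\sigma_1,\dots,\sigma_n)$. Each $\sigma_i=(\pi_i,\Join_i)$ consists of a bijection $\pi_i:[m]\to A$, where $\pi_i(1)$ is agent $i$'s most preferred alternative, and a map $\Join_i:[m-1]\to\{\succ,\succ\!\!\succ\}$. Here $\Join_i(j)=\,\succ\!\!\succ$ means a strong preference for $\pi_i(j)$ over $\pi_i(j+1)$, and $\Join_i(j)=\,\succ$ means an ordinary preference. A metric $d$ on $N\cup A$ is nonnegative and symmetric, satisfies the triangle inequality, and has $d(x,x)=0$. For $\alpha\in[0,1]$, the profile $\vec\sigma$ is $\alpha$-consistent with $d$ under mandatory elicitation if for every agent $i$ and every $j\in[m-1]$: - if $\Join_i(j)=\,\succ$, then $d(i,\pi_i(j+1))\ge d(i,\pi_i(j))>\alpha\, d(i,\pi_i(j+1))$; - if $\Join_i(j)=\,\succ\!\!\succ$, then $d(i,\pi_i(j))\le \alpha\, d(i,\pi_i(j+1))$. The social cost of $a$ is $\mathrm{sc}_d(a)=\sum_{i\in N}d(i,a)$. The distortion of $a$ is $\mathsf{dist}_\alpha(a,\mathcal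 E)=\sup_{d}\ \mathrm{sc}_d(a)/\min_{b\in A}\mathrm{sc}_d(b)$, where the supremum is over metrics $d$ with which $\vec\sigma$ is $\alpha$-consistent under mandatory elicitation. A deterministic voting rule $f$ maps every profile (for any number of agents) over the $m$ alternatives to an alternative. Its distortion is $\mathsf{dist}_\alpha(f)=\sup_{\mathcal E}\mathsf{dist}_\alpha(f(\vec\sigma),\mathcal E)$, with the supremum over all elections with $m$ alternatives. *)

theory Defs
  imports Complex_Main "HOL-Library.Extended_Real"
begin

(* Agents: N = {0..<n}; alternatives: A = {0..<m}.
   Ranks are 0-indexed: rank r in {0..<m} (r = 0 is the top choice), i.e. paper's pi_i(j) = rk i (j-1).
   A profile is a pair (rk, strong):
     rk i r      = alternative ranked at position r by agent i,
     strong i r  = True  iff  Join_i(r+1) is the strong preference (r < m-1),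
                   False iff  it is the ordinary preference.
   Points of the metric space N \<union> A are encoded in nat + nat: Inl i = agent i, Inr a = alternative a. *)

type_synonym ranking = "nat \<Rightarrow> nat \<Rightarrow> nat"
type_synonym intensity = "nat \<Rightarrow> nat \<Rightarrow> bool"
type_synonym point = "nat + nat"

definition valid_profile :: "nat \<Rightarrow> nat \<Rightarrow> ranking \<Rightarrow> bool" where
  "valid_profile m n rk \<longleftrightarrow> (\<forall>i<n. bij_betw (rk i) {0..<m} {0..<m})"

definition carrier :: "nat \<Rightarrow> nat \<Rightarrow> point set" where
  "carrier m n = Inl ` {0..<n} \<union> Inr ` {0..<m}"

definition is_metric_on :: "point set \<Rightarrow> (point \<Rightarrow> point \<Rightarrow> real) \<Rightarrow> bool" where
  "is_metric_on S d \<longleftrightarrow>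
     (\<forall>x\<in>S. \<forall>y\<in>S. d x y \<ge> 0 \<and> d x y = d y x) \<and>
     (\<forall>x\<in>S. d x x = 0) \<and>
     (\<forall>x\<in>S. \<forall>y\<in>S. \<forall>z\<in>S. d x z \<le> d x y + d y z)"

definition alpha_consistent ::
  "real \<Rightarrow> nat \<Rightarrow> nat \<Rightarrow> ranking \<Rightarrow> intensity \<Rightarrow> (point \<Rightarrow> point \<Rightarrow> real) \<Rightarrow> bool" where
  "alpha_consistent \<alpha> m n rk strong d \<longleftrightarrow>
     (\<forall>i<n. \<forall>j. j + 1 < m \<longrightarrow>
        (if strong i j
         then d (Inl i) (Inr (rk i j)) \<le> \<alpha> * d (Inl i) (Inr (rk i (j+1)))
         else d (Inl i) (Inr (rk i (j+1))) \<ge> d (Inl i) (Inr (rk i j)) \<and>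
              d (Inl i) (Inr (rk i j)) > \<alpha> * d (Inl i) (Inr (rk i (j+1)))))"

definition social_cost :: "nat \<Rightarrow> (point \<Rightarrow> point \<Rightarrow> real) \<Rightarrow> nat \<Rightarrow> real" where
  "social_cost n d a = (\<Sum>i<n. d (Inl i) (Inr a))"

(* ratio sc(a) / min_b sc(b), in the extended reals; x/0 = \<infinity> for x > 0 and 0/0 = 1 *)
definition cost_ratio :: "nat \<Rightarrow> nat \<Rightarrow> (point \<Rightarrow> point \<Rightarrow> real) \<Rightarrow> nat \<Rightarrow> ereal" where
  "cost_ratio m n d a =
     (let opt = Min (social_cost n d ` {0..<m}) in
      if opt > 0 then ereal (social_cost n d a / opt)
      else if social_cost n d a = 0 then 1 else \<infinity>)"

definition distortion_alt ::
  "real \<Rightarrow> nat \<Rightarrow> nat \<Rightarrow> ranking \<Rightarrow> intensity \<Rightarrow> nat \<Rightarrow> ereal" where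
  "distortion_alt \<alpha> m n rk strong a =
     (SUP d \<in> {d. is_metric_on (carrier m n) d \<and> alpha_consistent \<alpha> m n rk strong d}.
        cost_ratio m n d a)"

(* A deterministic voting rule: maps (number of agents, profile) to an alternative,
   depending only on the profile itself (not on junk values outside the domain). *)
definition voting_rule :: "nat \<Rightarrow> (nat \<Rightarrow> ranking \<Rightarrow> intensity \<Rightarrow> nat) \<Rightarrow> bool" where
  "voting_rule m f \<longleftrightarrow>
     (\<forall>n rk strong. n \<ge> 1 \<longrightarrow> valid_profile m n rk \<longrightarrow> f n rk strong < m) \<and>
     (\<forall>n rk strong rk' strong'.
        (\<forall>i<n. \<forall>r<m. rk i r = rk' i r) \<longrightarrow>
        (\<forall>i<n. \<forall>r. r + 1 < m \<longrightarrow> strong i r = strong' i r) \<longrightarrow>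
        f n rk strong = f n rk' strong')"

definition distortion_rule :: "real \<Rightarrow> nat \<Rightarrow> (nat \<Rightarrow> ranking \<Rightarrow> intensity \<Rightarrow> nat) \<Rightarrow> ereal" where
  "distortion_rule \<alpha> m f =
     (SUP e \<in> {(n, rk, strong). n \<ge> 1 \<and> valid_profile m n rk}.
        (case e of (n, rk, strong) \<Rightarrow> distortion_alt \<alpha> m n rk strong (f n rk strong)))"

end

theory Submission
  imports Defs
begin

text \<open>Both bounds come from two-agent elections whose metrics are realised in the plane with
the maximum-coordinate distance.
If both agents strongly prefer their own top choice, and the tops 0 and 1 are swapped, a rule
choosing 0 or 1 can be punished by putting the agent who ranked the winner first slightly off the
winner, at the largest distance its strong preference allows: the ratio is \<open>1 + 2\<alpha>\<close>. A rule
choosing any other alternative is punished by a metric in which alternatives 0 and 1 cost nothing.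
If instead the two agents have opposite rankings with only ordinary preferences, one of them ranks
the winner in the lower half of its ranking, i.e. at position at least \<open>k = \<lfloor>m/2\<rfloor>\<close>. Along that
agent's ranking distances may grow by a factor just below \<open>1/\<alpha>\<close> per step, so the winner can be
\<open>1/\<alpha>\<^sup>k\<close> times farther than its top choice, while the other agent is equidistant from
everything. This gives ratios approaching \<open>(3 - \<alpha>\<^sup>k) / (1 + \<alpha>\<^sup>k) = 1 + 2 (1 - \<alpha>\<^sup>k) / (1 + \<alpha>\<^sup>k)\<close>.\<close>

definition linf_dist :: "(point \<Rightarrow> real \<times> real) \<Rightarrow> point \<Rightarrow> point \<Rightarrow> real" where
  "linf_dist P u v = max \<bar>fst (P u) - fst (P v)\<bar> \<bar>snd (P u) - snd (P v)\<bar>"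

lemma is_metric_on_linf_dist: "is_metric_on S (linf_dist P)"
  unfolding is_metric_on_def linf_dist_def
  by (auto simp: abs_minus_commute max_def split: abs_split)

lemma cost_ratio_ge_divide:
  assumes pos: "\<And>a. a < m \<Longrightarrow> social_cost n d a > 0" and "w < m" "z < m"
  shows "ereal (social_cost n d z / social_cost n d w) \<le> cost_ratio m n d z"
proof -
  let ?opt = "Min (social_cost n d ` {0..<m})"
  have "?opt \<in> social_cost n d ` {0..<m}"
    using \<open>w < m\<close> by (intro Min_in) auto
  then have "?opt > 0" using pos by auto
  moreover have "?opt \<le> social_cost n d w"
    using \<open>w < m\<close> by (intro Min_le) auto
  ultimately have "social_cost n d z / social_cost n d w \<le> social_cost n d z / ?opt"
    using pos[OF \<open>z < m\<close>] by (intro divide_left_mono) auto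
  then show ?thesis using \<open>?opt > 0\<close> unfolding cost_ratio_def Let_def by simp
qed

lemma cost_ratio_eq_infinity:
  assumes "w < m" "social_cost n d w = 0" "social_cost n d z \<noteq> 0"
  shows "cost_ratio m n d z = \<infinity>"
proof -
  have "Min (social_cost n d ` {0..<m}) \<le> social_cost n d w"
    using assms(1) by (intro Min_le) auto
  then show ?thesis using assms(2,3) unfolding cost_ratio_def Let_def by auto
qed

lemma cost_ratio_le_distortion_alt:
  assumes "is_metric_on (carrier m n) d" "alpha_consistent \<alpha> m n rk strong d"
  shows "cost_ratio m n d a \<le> distortion_alt \<alpha> m n rk strong a"
  unfolding distortion_alt_def using assms by (intro SUP_upper) auto

lemma distortion_alt_le_distortion_rule:
  assumes "n \<ge> 1" "valid_profile m n rk"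
  shows "distortion_alt \<alpha> m n rk strong (f n rk strong) \<le> distortion_rule \<alpha> m f"
  unfolding distortion_rule_def using assms
  by (intro SUP_upper2[where i="(n, rk, strong)"]) auto

definition swap_top_profile :: ranking where
  "swap_top_profile i r = (if i = 1 \<and> r < 2 then 1 - r else r)"

lemma swap_top_profile_simps:
  "i < 2 \<Longrightarrow> swap_top_profile i 0 = i"
  "i < 2 \<Longrightarrow> swap_top_profile i (Suc 0) = 1 - i"
  "2 \<le> r \<Longrightarrow> swap_top_profile i r = r"
  by (auto simp: swap_top_profile_def)

lemma valid_profile_swap_top: "m \<ge> 2 \<Longrightarrow> valid_profile m 2 swap_top_profile"
  unfolding valid_profile_def
  by (auto intro!: bij_betw_byWitness[where f'="swap_top_profile _"] simp: swap_top_profile_def)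

definition swap_top_embedding :: "real \<Rightarrow> real \<Rightarrow> nat \<Rightarrow> point \<Rightarrow> real \<times> real" where
  "swap_top_embedding \<alpha> p z u =
     (case u of Inl i \<Rightarrow> (if i = z then (p, 0) else (2, 0))
              | Inr x \<Rightarrow> (if x = z then (0, 0) else if x = 1 - z then (2, 0) else (0, 2 / \<alpha> ^ x)))"

lemma linf_dist_swap_top_embedding:
  assumes "0 < \<alpha>" "\<alpha> \<le> 1" "0 \<le> p" "p \<le> 1"
  shows "linf_dist (swap_top_embedding \<alpha> p z) (Inl i) (Inr x) =
    (if x = z then (if i = z then p else 2)
     else if x = 1 - z then (if i = z then 2 - p else 0) else 2 / \<alpha> ^ x)"
proof -
  have "2 \<le> 2 / \<alpha> ^ x"
    using assms(1,2) by (simp add: field_simps power_le_one)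
  then show ?thesis
    using assms unfolding swap_top_embedding_def linf_dist_def by auto
qed

lemma alpha_consistent_swap_top_embedding:
  assumes "0 < \<alpha>" "\<alpha> \<le> 1" "0 \<le> p" "p \<le> \<alpha> * (2 - p)" "z < 2"
  shows "alpha_consistent \<alpha> m 2 swap_top_profile (\<lambda>_ _. True) (linf_dist (swap_top_embedding \<alpha> p z))"
  unfolding alpha_consistent_def if_True
proof (intro allI impI)
  fix i j :: nat assume "i < 2"
  have "p * (1 + \<alpha>) \<le> 1 * (1 + \<alpha>)"
    using assms(2,4) by (simp add: algebra_simps)
  then have "p \<le> 1" using assms(1) by simp
  have "2 \<le> 2 / \<alpha>"
    using assms(1,2) by (simp add: field_simps)
  moreover have "z = 0 \<or> z = 1" "i = 0 \<or> i = 1" "j = 0 \<or> j = 1 \<or> 2 \<le> j" using \<open>i < 2\<close> assms(5) by auto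
  ultimately show "linf_dist (swap_top_embedding \<alpha> p z) (Inl i) (Inr (swap_top_profile i j))
      \<le> \<alpha> * linf_dist (swap_top_embedding \<alpha> p z) (Inl i) (Inr (swap_top_profile i (j + 1)))"
    using assms \<open>p \<le> 1\<close>
    by (elim disjE) (auto simp: linf_dist_swap_top_embedding swap_top_profile_simps)
qed

lemma distortion_alt_swap_top_ge:
  assumes "0 < \<alpha>" "\<alpha> \<le> 1" and "2 \<le> m" "z < 2"
  shows "ereal (1 + 2 * \<alpha>) \<le> distortion_alt \<alpha> m 2 swap_top_profile (\<lambda>_ _. True) z"
proof -
  define p where "p = 2 * \<alpha> / (1 + \<alpha>)"
  define d where "d = linf_dist (swap_top_embedding \<alpha> p z)"
  have p: "0 < p" "p \<le> 1" "p = \<alpha> * (2 - p)" "(2 + p) / (2 - p) = 1 + 2 * \<alpha>"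
    using assms(1,2) unfolding p_def by (auto simp: field_simps)
  have "alpha_consistent \<alpha> m 2 swap_top_profile (\<lambda>_ _. True) d"
    unfolding d_def using assms p by (intro alpha_consistent_swap_top_embedding) auto
  moreover have "ereal (1 + 2 * \<alpha>) \<le> cost_ratio m 2 d z"
  proof -
    have cost: "social_cost 2 d x = (if x = z then 2 + p else if x = 1 - z then 2 - p else 4 / \<alpha> ^ x)" for x
      using assms p \<open>z < 2\<close> unfolding d_def social_cost_def numeral_2_eq_2
      by (auto simp: less_Suc_eq linf_dist_swap_top_embedding)
    have "social_cost 2 d x > 0" for x
      using assms(1) p by (simp add: cost)
    moreover have "1 - z \<noteq> z" "1 - z < m" using assms(3,4) by arith+
    ultimately show ?thesis
      using cost_ratio_ge_divide[of m 2 d "1 - z" z] p assms(3,4) by (simp add: cost)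
  qed
  ultimately show ?thesis
    unfolding d_def using cost_ratio_le_distortion_alt[OF is_metric_on_linf_dist] order_trans by blast
qed

lemma distortion_alt_swap_top_eq_infinity:
  assumes "0 < \<alpha>" and "2 \<le> z" "z < m"
  shows "distortion_alt \<alpha> m 2 swap_top_profile (\<lambda>_ _. True) z = \<infinity>"
proof -
  define c :: "nat \<Rightarrow> real" where "c x = (if x < z then 0 else 1 / \<alpha> ^ x)" for x
  define P :: "point \<Rightarrow> real \<times> real" where
    "P u = (case u of Inl i \<Rightarrow> (0, 0) | Inr x \<Rightarrow> (c x, 0))" for u
  have c_nonneg: "c x \<ge> 0" for x
    using assms(1) by (simp add: c_def)
  have dist: "linf_dist P (Inl i) (Inr x) = c x" for i x
    using c_nonneg[of x] unfolding P_def linf_dist_def by simp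
  have "alpha_consistent \<alpha> m 2 swap_top_profile (\<lambda>_ _. True) (linf_dist P)"
    unfolding alpha_consistent_def if_True dist
  proof (intro allI impI)
    fix i j :: nat
    show "c (swap_top_profile i j) \<le> \<alpha> * c (swap_top_profile i (j + 1))"
    proof (cases "2 \<le> j")
      case True
      then show ?thesis using assms(1) by (simp add: swap_top_profile_simps c_def)
    next
      case False
      then have "c (swap_top_profile i j) = 0"
        using \<open>2 \<le> z\<close> by (auto simp: swap_top_profile_def c_def)
      then show ?thesis using assms(1) c_nonneg by simp
    qed
  qed
  moreover have "cost_ratio m 2 (linf_dist P) z = \<infinity>"
  proof (rule cost_ratio_eq_infinity)
    show "social_cost 2 (linf_dist P) 0 = 0" "social_cost 2 (linf_dist P) z \<noteq> 0"
      using assms(1,2) by (simp_all add: social_cost_def dist c_def)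
  qed (use assms in auto)
  ultimately have "\<infinity> \<le> distortion_alt \<alpha> m 2 swap_top_profile (\<lambda>_ _. True) z"
    using cost_ratio_le_distortion_alt[OF is_metric_on_linf_dist] by metis
  then show ?thesis by simp
qed

lemma distortion_rule_ge_swap_top:
  assumes "2 \<le> m" "0 < \<alpha>" "\<alpha> \<le> 1" and "voting_rule m f"
  shows "ereal (1 + 2 * \<alpha>) \<le> distortion_rule \<alpha> m f"
proof -
  define z where "z = f 2 swap_top_profile (\<lambda>_ _. True)"
  have "z < m"
    using assms(4) valid_profile_swap_top[OF assms(1)] unfolding voting_rule_def z_def by auto
  then have "ereal (1 + 2 * \<alpha>) \<le> distortion_alt \<alpha> m 2 swap_top_profile (\<lambda>_ _. True) z"
    using assms(1-3) distortion_alt_swap_top_ge distortion_alt_swap_top_eq_infinity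
    by (cases "z < 2") auto
  also have "\<dots> \<le> distortion_rule \<alpha> m f"
    unfolding z_def using valid_profile_swap_top[OF assms(1)]
    by (intro distortion_alt_le_distortion_rule) auto
  finally show ?thesis .
qed

definition reversed_profile :: "nat \<Rightarrow> ranking" where
  "reversed_profile m i r = (if i = 1 then m - 1 - r else r)"

lemma reversed_profile_involutive: "r < m \<Longrightarrow> reversed_profile m i (reversed_profile m i r) = r"
  and reversed_profile_less: "r < m \<Longrightarrow> reversed_profile m i r < m"
  by (auto simp: reversed_profile_def)

lemma valid_profile_reversed: "valid_profile m n (reversed_profile m)"
proof -
  have "bij_betw (reversed_profile m i) {0..<m} {0..<m}" for i
    by (rule bij_betw_byWitness[where f'="reversed_profile m i"])
      (auto simp: reversed_profile_involutive reversed_profile_less)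
  then show ?thesis unfolding valid_profile_def by blast
qed

definition capped_geometric :: "real \<Rightarrow> real \<Rightarrow> real \<Rightarrow> nat \<Rightarrow> real" where
  "capped_geometric t c \<mu> r = min (t / \<mu> ^ r) c"

context
  fixes t c \<mu> :: real
  assumes t: "0 < t" "t \<le> c" and \<mu>: "0 < \<mu>" "\<mu> < 1"
begin

lemma capped_geometric_bounds: "t \<le> capped_geometric t c \<mu> r" "capped_geometric t c \<mu> r \<le> c"
  using t \<mu> by (auto simp: capped_geometric_def le_divide_eq power_le_one)

lemma capped_geometric_0: "capped_geometric t c \<mu> 0 = t"
  using t by (simp add: capped_geometric_def)

lemma capped_geometric_Suc_ge: "capped_geometric t c \<mu> r \<le> capped_geometric t c \<mu> (Suc r)"
proof -
  have "t / \<mu> ^ r \<le> t / \<mu> ^ Suc r"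
    using t \<mu> by (intro divide_left_mono) (auto simp: power_decreasing)
  then show ?thesis by (auto simp: capped_geometric_def)
qed

lemma capped_geometric_Suc_less:
  assumes "0 \<le> \<alpha>" "\<alpha> < \<mu>"
  shows "\<alpha> * capped_geometric t c \<mu> (Suc r) < capped_geometric t c \<mu> r"
proof (cases "t / \<mu> ^ r \<le> c")
  case True
  have "\<alpha> * capped_geometric t c \<mu> (Suc r) \<le> \<alpha> * (t / \<mu> ^ Suc r)"
    using assms(1) by (intro mult_left_mono) (auto simp: capped_geometric_def)
  also have "\<dots> = (\<alpha> / \<mu>) * (t / \<mu> ^ r)" by (simp add: field_simps)
  also have "\<dots> < t / \<mu> ^ r"
    using assms t \<mu> by (simp add: field_simps)
  finally show ?thesis using True by (simp add: capped_geometric_def)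
next
  case False
  then have "capped_geometric t c \<mu> (Suc r) = c" "capped_geometric t c \<mu> r = c"
    using capped_geometric_Suc_ge[of r] capped_geometric_bounds[of "Suc r"]
    by (auto simp: capped_geometric_def)
  then show ?thesis using assms t \<mu> by simp
qed

end

definition two_agent_embedding :: "nat \<Rightarrow> real \<Rightarrow> (nat \<Rightarrow> real) \<Rightarrow> point \<Rightarrow> real \<times> real" where
  "two_agent_embedding F t h p =
     (case p of Inl i \<Rightarrow> (if i = F then (0, 1) else (t + 1, 0)) | Inr a \<Rightarrow> (h a, 1))"

lemma linf_dist_two_agent_embedding:
  assumes "t \<ge> 0" "t \<le> h a" "h a \<le> t + 2"
  shows "linf_dist (two_agent_embedding F t h) (Inl i) (Inr a) = (if i = F then h a else 1)"
  using assms unfolding two_agent_embedding_def linf_dist_def by auto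

lemma social_cost_two_agent_embedding:
  assumes "F < 2" "t \<ge> 0" "t \<le> h a" "h a \<le> t + 2"
  shows "social_cost 2 (linf_dist (two_agent_embedding F t h)) a = h a + 1"
  using assms unfolding social_cost_def numeral_2_eq_2
  by (auto simp: linf_dist_two_agent_embedding less_Suc_eq)

lemma alpha_consistent_two_agent_embedding:
  fixes g :: "nat \<Rightarrow> real"
  assumes "t \<ge> 0" "\<And>r. t \<le> g r" "\<And>r. g r \<le> t + 2"
    and "\<And>r. g r \<le> g (Suc r)" "\<And>r. \<alpha> * g (Suc r) < g r" and "\<alpha> < 1"
  shows "alpha_consistent \<alpha> m 2 (reversed_profile m) (\<lambda>_ _. False)
           (linf_dist (two_agent_embedding F t (g \<circ> reversed_profile m F)))"
  unfolding alpha_consistent_def if_False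
proof (intro allI impI)
  fix i j :: nat assume "j + 1 < m"
  let ?d = "\<lambda>r. linf_dist (two_agent_embedding F t (g \<circ> reversed_profile m F))
                    (Inl i) (Inr (reversed_profile m i r))"
  have "?d r = (if i = F then g r else 1)" if "r < m" for r
    using that assms(1-3)
    by (subst linf_dist_two_agent_embedding) (auto simp: reversed_profile_involutive)
  then show "?d j \<le> ?d (j + 1) \<and> \<alpha> * ?d (j + 1) < ?d j"
    using \<open>j + 1 < m\<close> assms(4-6) by simp
qed

lemma distortion_alt_reversed_ge_power:
  assumes "2 \<le> m" "0 \<le> \<alpha>" "\<alpha> < \<mu>" "\<mu> < 1" "z < m"
  shows "ereal ((3 - \<mu> ^ (m div 2)) / (1 + \<mu> ^ (m div 2)))
           \<le> distortion_alt \<alpha> m 2 (reversed_profile m) (\<lambda>_ _. False) z"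
proof -
  define k where "k = m div 2"
  define u where "u = \<mu> ^ k"
  \<comment> \<open>chosen so that \<open>t / \<mu>\<^sup>k = t + 2\<close>: the cap is reached exactly at position \<open>k\<close>\<close>
  define t where "t = 2 * u / (1 - u)"
  define g where "g = capped_geometric t (t + 2) \<mu>"
  define F :: nat where "F = (if k \<le> z then 0 else 1)"
  define \<sigma> where "\<sigma> = reversed_profile m F"
  define d where "d = linf_dist (two_agent_embedding F t (g \<circ> \<sigma>))"
  have \<mu>: "0 < \<mu>" "\<mu> < 1" using assms(2-4) by auto
  have u: "0 < u" "u < 1"
    using \<mu> assms(1) unfolding u_def k_def by (auto simp: power_less_one_iff)
  have t: "0 < t" "t \<le> t + 2"
    using u unfolding t_def by auto
  note g_bounds = capped_geometric_bounds[OF t \<mu>, folded g_def]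
  have "alpha_consistent \<alpha> m 2 (reversed_profile m) (\<lambda>_ _. False) d"
    unfolding d_def \<sigma>_def g_def using t g_bounds assms(3,4)
    by (intro alpha_consistent_two_agent_embedding capped_geometric_Suc_ge capped_geometric_Suc_less
        \<mu> assms(2)) (auto simp: g_def)
  moreover have "ereal ((3 - u) / (1 + u)) \<le> cost_ratio m 2 d z"
  proof -
    have cost: "social_cost 2 d a = g (\<sigma> a) + 1" for a
      using t g_bounds[of "\<sigma> a"] unfolding d_def
      by (subst social_cost_two_agent_embedding) (auto simp: F_def)
    define w where "w = \<sigma> 0"
    have "w < m" "\<sigma> w = 0"
      using assms(1) by (simp_all add: w_def \<sigma>_def reversed_profile_involutive reversed_profile_less)
    then have cost_w: "social_cost 2 d w = t + 1"
      using capped_geometric_0[OF t \<mu>] by (simp add: cost g_def)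
    have "k \<le> \<sigma> z"
      using assms(1,5) unfolding \<sigma>_def F_def reversed_profile_def k_def by auto
    then have "\<mu> ^ \<sigma> z \<le> u"
      using \<mu> unfolding u_def by (intro power_decreasing) auto
    moreover have "t / u = t + 2"
      using u unfolding t_def by (simp add: field_simps)
    ultimately have "t + 2 \<le> t / \<mu> ^ \<sigma> z"
      using t \<mu> u by (metis divide_left_mono less_imp_le mult_pos_pos zero_less_power)
    then have cost_z: "social_cost 2 d z = t + 3"
      by (simp add: cost g_def capped_geometric_def)
    have "t + 3 = (3 - u) / (1 - u)" "t + 1 = (1 + u) / (1 - u)"
      using u unfolding t_def by (simp_all add: field_simps)
    then have "(t + 3) / (t + 1) = (3 - u) / (1 + u)"
      using u by simp
    moreover have "social_cost 2 d a > 0" for a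
      using g_bounds(1)[of "\<sigma> a"] t by (simp add: cost)
    ultimately show ?thesis
      using cost_ratio_ge_divide[of m 2 d w z] cost_w cost_z \<open>w < m\<close> assms(5) by simp
  qed
  ultimately show ?thesis
    unfolding u_def k_def d_def
    using cost_ratio_le_distortion_alt[OF is_metric_on_linf_dist] order_trans by blast
qed

text \<open>Ordinary preferences demand \<open>d(i, \<pi>\<^sub>i(j)) > \<alpha> d(i, \<pi>\<^sub>i(j+1))\<close> strictly, so the growth
factor \<open>1/\<alpha>\<close> itself is not admissible and the bound is only approached as \<open>\<mu> \<rightarrow> \<alpha>\<close>.\<close>

lemma distortion_alt_reversed_ge:
  assumes "2 \<le> m" "0 \<le> \<alpha>" "\<alpha> < 1" "z < m"
  shows "ereal ((3 - \<alpha> ^ (m div 2)) / (1 + \<alpha> ^ (m div 2)))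
           \<le> distortion_alt \<alpha> m 2 (reversed_profile m) (\<lambda>_ _. False) z"
proof (rule tendsto_upperbound)
  let ?k = "m div 2"
  have "((\<lambda>\<mu>. (3 - \<mu> ^ ?k) / (1 + \<mu> ^ ?k)) \<longlongrightarrow> (3 - \<alpha> ^ ?k) / (1 + \<alpha> ^ ?k)) (at_right \<alpha>)"
    using assms(2) by (intro tendsto_intros) (auto simp: add_nonneg_eq_0_iff)
  then show "((\<lambda>\<mu>. ereal ((3 - \<mu> ^ ?k) / (1 + \<mu> ^ ?k)))
      \<longlongrightarrow> ereal ((3 - \<alpha> ^ ?k) / (1 + \<alpha> ^ ?k))) (at_right \<alpha>)"
    by (rule tendsto_ereal)
  show "\<forall>\<^sub>F \<mu> in at_right \<alpha>. ereal ((3 - \<mu> ^ ?k) / (1 + \<mu> ^ ?k))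
      \<le> distortion_alt \<alpha> m 2 (reversed_profile m) (\<lambda>_ _. False) z"
    using eventually_at_right_real[OF assms(3)]
    by eventually_elim (use assms distortion_alt_reversed_ge_power in auto)
qed (simp add: trivial_limit_at_right_real)

lemma distortion_rule_ge_reversed:
  assumes "2 \<le> m" "0 \<le> \<alpha>" "\<alpha> < 1" and "voting_rule m f"
  shows "ereal ((3 - \<alpha> ^ (m div 2)) / (1 + \<alpha> ^ (m div 2))) \<le> distortion_rule \<alpha> m f"
proof -
  define z where "z = f 2 (reversed_profile m) (\<lambda>_ _. False)"
  have "z < m"
    using assms(4) valid_profile_reversed unfolding voting_rule_def z_def by auto
  with assms(1-3) have "ereal ((3 - \<alpha> ^ (m div 2)) / (1 + \<alpha> ^ (m div 2)))
      \<le> distortion_alt \<alpha> m 2 (reversed_profile m) (\<lambda>_ _. False) z"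
    by (rule distortion_alt_reversed_ge)
  also have "\<dots> \<le> distortion_rule \<alpha> m f"
    unfolding z_def using valid_profile_reversed by (intro distortion_alt_le_distortion_rule) auto
  finally show ?thesis .
qed

theorem theorem1:
  fixes m :: nat and \<alpha> :: real
    and f :: "nat \<Rightarrow> ranking \<Rightarrow> intensity \<Rightarrow> nat"
  assumes "m \<ge> 2" and "0 \<le> \<alpha>" and "\<alpha> \<le> 1"
    and "voting_rule m f"
  shows "distortion_rule \<alpha> m f \<ge>
           ereal (1 + 2 * max \<alpha> ((1 - \<alpha> ^ (m div 2)) / (1 + \<alpha> ^ (m div 2))))"
proof (cases "\<alpha> \<le> (1 - \<alpha> ^ (m div 2)) / (1 + \<alpha> ^ (m div 2))")
  case True
  have "\<alpha> < 1"
    using True assms(3) by (cases "\<alpha> = 1") auto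
  moreover have "1 + 2 * ((1 - \<alpha> ^ (m div 2)) / (1 + \<alpha> ^ (m div 2)))
      = (3 - \<alpha> ^ (m div 2)) / (1 + \<alpha> ^ (m div 2))"
    using assms(2) by (simp add: field_simps add_nonneg_eq_0_iff)
  ultimately show ?thesis
    using True assms distortion_rule_ge_reversed by (simp add: max_def)
next
  case False
  have "0 \<le> (1 - \<alpha> ^ (m div 2)) / (1 + \<alpha> ^ (m div 2))"
    using assms(2,3) by (simp add: power_le_one)
  then have "0 < \<alpha>" using False by linarith
  then show ?thesis
    using False assms distortion_rule_ge_swap_top by (simp add: max_def)
qed

end
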